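(* Let $G$ be a modular noetherian right $\ell$-group in which the meet $s^{-1} := \bigwedge X(G^-)$ exists. Then the join of all elements covering $e$ exists and equals $s$: \[ s = \bigvee \{ g \in G : g \succ e\}. \] Moreover, the interval $[e,s]$ is a modular geometric lattice.
   Context: A right $\ell$-group is a group $G$ (identity $e$) with a right-invariant partial order making $G$ a lattice. It is modular if the lattice is modular. It is noetherian if for each $g$ the set $\{h \geq g\}$ satisfies the descending chain condition and the set $\{h \leq g\}$ satisfies the ascending chain condition. $G^- = \{g \leq e\}$ and $X(G^-)$ is the set of elements covered by $e$. The notation $g \succ e$ means that $g$ covers $e$. A modular lattice of finite length is geometric if every element is the join of a finite (possibly empty) set of atoms. *)

theory Defs
  imports Main
begin

text \<open>A right l-group is modelled as a type that is simultaneously a (not necessarily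
commutative) group, written additively (identity 0 = e, inverse uminus, product +),
and a lattice (order \<le>, meet inf, join sup), with the order right-invariant.\<close>

definition right_invariant :: "('a::{group_add,lattice}) itself \<Rightarrow> bool" where
  "right_invariant _ \<longleftrightarrow> (\<forall>x y z::'a. x \<le> y \<longrightarrow> x + z \<le> y + z)"

definition modular_on :: "('a::lattice) set \<Rightarrow> bool" where
  "modular_on A \<longleftrightarrow> (\<forall>x\<in>A. \<forall>y\<in>A. \<forall>z\<in>A. x \<le> z \<longrightarrow> sup x (inf y z) = inf (sup x y) z)"

definition noetherian :: "('a::order) itself \<Rightarrow> bool" where
  "noetherian _ \<longleftrightarrow> (\<forall>g::'a. wfP (\<lambda>x y. g \<le> x \<and> x < y) \<and> wfP (\<lambda>x y. x \<le> g \<and> y < x))"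

definition covers :: "'a::order \<Rightarrow> 'a \<Rightarrow> bool" where
  "covers g h \<longleftrightarrow> h < g \<and> \<not> (\<exists>k. h < k \<and> k < g)"

definition is_lub_in :: "'a::order set \<Rightarrow> 'a set \<Rightarrow> 'a \<Rightarrow> bool" where
  "is_lub_in A S x \<longleftrightarrow> x \<in> A \<and> (\<forall>y\<in>S. y \<le> x) \<and> (\<forall>z\<in>A. (\<forall>y\<in>S. y \<le> z) \<longrightarrow> x \<le> z)"

definition is_glb_in :: "'a::order set \<Rightarrow> 'a set \<Rightarrow> 'a \<Rightarrow> bool" where
  "is_glb_in A S x \<longleftrightarrow> x \<in> A \<and> (\<forall>y\<in>S. x \<le> y) \<and> (\<forall>z\<in>A. (\<forall>y\<in>S. z \<le> y) \<longrightarrow> z \<le> x)"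

definition X_neg :: "'a::{group_add,order} set" where
  "X_neg = {g. covers 0 g}"

definition finite_length :: "'a::order set \<Rightarrow> bool" where
  "finite_length A \<longleftrightarrow> (\<exists>n::nat. \<forall>C \<subseteq> A. (\<forall>x\<in>C. \<forall>y\<in>C. x \<le> y \<or> y \<le> x) \<longrightarrow> finite C \<and> card C \<le> n)"

definition modular_geometric_lattice :: "'a::lattice set \<Rightarrow> 'a \<Rightarrow> bool" where
  "modular_geometric_lattice A b \<longleftrightarrow>
     b \<in> A \<and> (\<forall>x\<in>A. b \<le> x) \<and>
     (\<forall>x\<in>A. \<forall>y\<in>A. sup x y \<in> A \<and> inf x y \<in> A) \<and>
     modular_on A \<and> finite_length A \<and>
     (\<forall>x\<in>A. \<exists>F. finite F \<and> F \<subseteq> {a\<in>A. b < a \<and> \<not> (\<exists>k\<in>A. b < k \<and> k < a)} \<and> is_lub_in A F x)"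

end

theory Submission
  imports Defs
begin

text \<open>
Right translations are order automorphisms, so the elements covered by \<open>s\<close> are exactly
\<open>X(G\<^sup>-) + s\<close>, their meet is \<open>0\<close>, and every cover
\<open>u \<succ> z\<close> satisfies \<open>-s + u \<le> z\<close>. If an atom \<open>b\<close> were
not below \<open>s\<close>, modularity would make \<open>u = b \<squnion> s\<close> cover
\<open>s\<close> and all the joins \<open>y \<squnion> b\<close> of lower covers \<open>y\<close> of
\<open>s\<close>, whence \<open>-s + u \<le> 0\<close>; then translating by \<open>-u + s\<close>
maps \<open>[0, s]\<close> strictly into itself and moves \<open>s\<close> down, contradicting the
descending chain condition. The descending chain condition also shows that \<open>0\<close> is the
meet of finitely many lower covers of \<open>s\<close>, which by modularity makes
\<open>[0, s]\<close> complemented; with the ascending chain condition every element of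
\<open>[0, s]\<close>, in particular \<open>s\<close>, is then a finite join of atoms. A modular
lattice whose top is a join of \<open>n\<close> atoms has length at most \<open>n\<close>.
\<close>

lemma foldr_sup_le_iff:
  "foldr sup xs z \<le> (w::'a::lattice) \<longleftrightarrow> z \<le> w \<and> (\<forall>x\<in>set xs. x \<le> w)"
  by (induction xs) auto

lemma foldr_sup_upper:
  "z \<le> foldr sup xs z" "x \<in> set xs \<Longrightarrow> x \<le> foldr sup xs (z::'a::lattice)"
  using foldr_sup_le_iff[of xs z "foldr sup xs z"] by auto

lemma foldr_sup_mono: "z \<le> z' \<Longrightarrow> foldr sup xs z \<le> foldr sup xs (z'::'a::lattice)"
  by (induction xs) (auto intro: le_supI2)

lemma le_foldr_inf_iff:
  "(w::'a::lattice) \<le> foldr inf xs z \<longleftrightarrow> w \<le> z \<and> (\<forall>x\<in>set xs. w \<le> x)"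
  by (induction xs) auto

lemma is_lub_in_foldr_sup:
  assumes "foldr sup xs z \<in> A" and "\<forall>a\<in>A. z \<le> a"
  shows "is_lub_in A (set xs) (foldr sup xs (z::'a::lattice))"
  using assms foldr_sup_upper(2) unfolding is_lub_in_def by (auto simp: foldr_sup_le_iff)


subsection \<open>Chain conditions\<close>

lemma exists_minimal_above:
  assumes "wfP (\<lambda>x y. g \<le> x \<and> x < y)" and "q \<in> Q" and "\<forall>x\<in>Q. g \<le> x"
  shows "\<exists>m\<in>Q. \<forall>x\<in>Q. \<not> x < (m::'a::order)"
proof -
  obtain m where "m \<in> Q" "\<forall>y. g \<le> y \<and> y < m \<longrightarrow> y \<notin> Q"
    using assms(1,2) unfolding wfp_eq_minimal by metis
  then show ?thesis using assms(3) by blast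
qed

lemma exists_maximal_below:
  assumes "wfP (\<lambda>x y. x \<le> g \<and> y < x)" and "q \<in> Q" and "\<forall>x\<in>Q. x \<le> g"
  shows "\<exists>m\<in>Q. \<forall>x\<in>Q. \<not> m < (x::'a::order)"
proof -
  obtain m where "m \<in> Q" "\<forall>y. y \<le> g \<and> m < y \<longrightarrow> y \<notin> Q"
    using assms(1,2) unfolding wfp_eq_minimal by metis
  then show ?thesis using assms(3) by blast
qed

lemma exists_cover_below:
  assumes dcc: "wfP (\<lambda>x y. g \<le> x \<and> x < y)" and "g < y"
  shows "\<exists>b. covers b g \<and> b \<le> (y::'a::order)"
proof -
  let ?Q = "{x. g < x \<and> x \<le> y}"
  have "y \<in> ?Q" "\<forall>x\<in>?Q. g \<le> x" using \<open>g < y\<close> by auto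
  then obtain b where b: "b \<in> ?Q" and min: "\<forall>x\<in>?Q. \<not> x < b"
    using exists_minimal_above[OF dcc] by meson
  have "covers b g"
    unfolding covers_def
  proof (intro conjI notI)
    show "g < b" using b by simp
    assume "\<exists>k. g < k \<and> k < b"
    then obtain k where "g < k" "k < b" by blast
    then have "k \<in> ?Q" using b by auto
    then show False using min \<open>k < b\<close> by blast
  qed
  then show ?thesis using b by blast
qed

lemma no_strict_mono_shrinking:
  assumes dcc: "wfP (\<lambda>x y. g \<le> x \<and> x < y)" and "\<forall>x\<in>A. g \<le> x" and "t ` A \<subseteq> A"
    and "\<forall>x\<in>A. \<forall>y\<in>A. x < y \<longrightarrow> t x < t y" and "x \<in> A"
  shows "\<not> t x < (x::'a::order)"
proof
  assume "t x < x"
  then obtain m where m: "m \<in> A" "t m < m" and min: "\<forall>y\<in>{y\<in>A. t y < y}. \<not> y < m"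
    using exists_minimal_above[OF dcc, of x "{y\<in>A. t y < y}"] assms(2,5) by blast
  have "t m \<in> A" using m(1) assms(3) by blast
  with assms(4) m have "t (t m) < t m" by blast
  with \<open>t m \<in> A\<close> have "t m \<in> {y\<in>A. t y < y}" by simp
  with min m(2) show False by auto
qed

lemma exists_finite_meet_lower_bound:
  assumes dcc: "wfP (\<lambda>x y. g \<le> x \<and> x < y)" and "g \<le> t" and "\<forall>y\<in>Y. g \<le> y"
  shows "\<exists>ys. set ys \<subseteq> Y \<and> (\<forall>y\<in>Y. foldr inf ys t \<le> (y::'a::lattice))"
proof -
  define Q where "Q = {foldr inf ys t | ys. set ys \<subseteq> Y}"
  have "t \<in> Q" unfolding Q_def by (intro CollectI exI[of _ "[]"]) simp
  moreover have "\<forall>q\<in>Q. g \<le> q"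
    using assms(2,3) unfolding Q_def by (auto simp: le_foldr_inf_iff subset_iff)
  ultimately obtain m where "m \<in> Q" and min: "\<forall>q\<in>Q. \<not> q < m"
    using exists_minimal_above[OF dcc] by meson
  then obtain ys where ys: "set ys \<subseteq> Y" and "m = foldr inf ys t" unfolding Q_def by blast
  with min have min: "\<forall>q\<in>Q. \<not> q < foldr inf ys t" by simp
  have "foldr inf ys t \<le> y" if "y \<in> Y" for y
  proof -
    have "inf y (foldr inf ys t) \<in> Q"
      unfolding Q_def using that ys by (intro CollectI exI[of _ "y # ys"]) simp
    then have "inf y (foldr inf ys t) = foldr inf ys t"
      using min by (simp add: order_less_le)
    then show ?thesis by (simp add: inf.absorb_iff2)
  qed
  then show ?thesis using ys by blast
qed


subsection \<open>Covers in modular lattices\<close>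

lemma modular_onD:
  "modular_on (UNIV :: 'a::lattice set) \<Longrightarrow> x \<le> z \<Longrightarrow> sup x (inf y z) = inf (sup x y) (z::'a)"
  unfolding modular_on_def by blast

lemma modular_on_subset: "modular_on B \<Longrightarrow> A \<subseteq> B \<Longrightarrow> modular_on A"
  unfolding modular_on_def by blast

lemma covers_inf_eq:
  assumes "covers a z" and "z \<le> y" and "\<not> a \<le> y"
  shows "inf a y = (z::'a::lattice)"
proof -
  have "z \<le> inf a y" using assms(1,2) unfolding covers_def by (simp add: order_less_imp_le)
  moreover have "inf a y < a" using assms(3) by (simp add: less_le_not_le)
  ultimately show ?thesis using assms(1) unfolding covers_def by (metis order_le_less)
qed

lemma covers_sup_if_covers_inf:
  assumes mod: "modular_on (UNIV :: 'a::lattice set)" and cov: "covers a (inf a b)"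
  shows "covers (sup a b) (b::'a)"
  unfolding covers_def
proof (intro conjI notI)
  have "\<not> a \<le> b" using cov unfolding covers_def by (auto simp: inf.absorb1)
  then show "b < sup a b" by (simp add: less_le_not_le)
next
  assume "\<exists>k. b < k \<and> k < sup a b"
  then obtain k where k: "b < k" "k < sup a b" by blast
  have join: "sup b (inf a k) = k"
    using modular_onD[OF mod, of b k a] k by (simp add: sup.commute inf.absorb2 order_less_imp_le)
  have "\<not> a \<le> k" using k by (meson le_sup_iff less_le_not_le order_less_imp_le)
  then have upper: "inf a k < a" by (simp add: less_le_not_le)
  have "inf a k \<noteq> inf a b"
  proof
    assume "inf a k = inf a b"
    then have "k = b" using join by (simp add: sup.absorb1)
    then show False using k(1) by simp
  qed
  moreover have "inf a b \<le> inf a k" using inf_mono[OF order_refl order_less_imp_le[OF k(1)]] .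
  ultimately have "inf a b < inf a k" by (metis order_le_neq_trans)
  with upper cov show False unfolding covers_def by blast
qed

text \<open>Adding to \<open>x\<close> the atoms \<open>bs ! i\<close> in turn from the right, the set of steps at which the
join strictly grows determines \<open>x\<close> among comparable elements of \<open>[z, s]\<close>.\<close>

definition growth_steps :: "'a::lattice list \<Rightarrow> 'a \<Rightarrow> nat set" where
  "growth_steps bs x = {i. i < length bs \<and> \<not> bs ! i \<le> foldr sup (drop (Suc i) bs) x}"

lemma growth_steps_antimono: "x \<le> y \<Longrightarrow> growth_steps bs y \<subseteq> growth_steps bs x"
  unfolding growth_steps_def by (auto dest: foldr_sup_mono intro: order_trans)

lemma growth_steps_subset: "growth_steps bs x \<subseteq> {..<length bs}"
  unfolding growth_steps_def by auto

lemma growth_steps_eq_imp_eq: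
  fixes bs :: "'a::lattice list"
  assumes mod: "modular_on (UNIV :: 'a::lattice set)"
    and atoms: "\<forall>b\<in>set bs. covers b z" and top: "foldr sup bs z = s"
    and "z \<le> x" "x \<le> y" "y \<le> s" and eq: "growth_steps bs x = growth_steps bs y"
  shows "x = y"
proof -
  have "foldr sup (drop i bs) x = foldr sup (drop i bs) y" if "i \<le> length bs" for i
    using that
  proof (induction i)
    case 0
    have "foldr sup bs w = s" if "z \<le> w" "w \<le> s" for w
    proof (rule order.antisym)
      show "foldr sup bs w \<le> s"
        using that(2) foldr_sup_upper(2)[of _ bs z] top by (auto simp: foldr_sup_le_iff)
      show "s \<le> foldr sup bs w" using foldr_sup_mono[OF that(1), of bs] top by simp
    qed
    then show ?case using assms(4-6) by (auto intro: order_trans)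
  next
    case (Suc i)
    define c X Y where "c = bs ! i" and "X = foldr sup (drop (Suc i) bs) x"
      and "Y = foldr sup (drop (Suc i) bs) y"
    have "drop i bs = c # drop (Suc i) bs"
      unfolding c_def using Suc.prems by (simp add: Cons_nth_drop_Suc)
    then have IH: "sup c X = sup c Y" using Suc unfolding X_def Y_def by simp
    have XY: "X \<le> Y" unfolding X_def Y_def using \<open>x \<le> y\<close> by (rule foldr_sup_mono)
    have zX: "z \<le> X" unfolding X_def using \<open>z \<le> x\<close> foldr_sup_upper(1) by (rule order_trans)
    show ?case
    proof (cases "c \<le> X")
      case True
      then have "sup c X = X" "sup c Y = Y" using XY by (auto intro: sup.absorb2 order_trans)
      with IH show ?thesis unfolding X_def Y_def by simp
    next
      case False
      then have "i \<in> growth_steps bs x"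
        using Suc.prems unfolding growth_steps_def c_def X_def by simp
      then have "i \<in> growth_steps bs y" using eq by simp
      then have "\<not> c \<le> Y" unfolding growth_steps_def c_def Y_def by simp
      moreover have "covers c z" using atoms Suc.prems unfolding c_def by simp
      ultimately have "inf c Y = z" using zX XY by (intro covers_inf_eq) (auto intro: order_trans)
      then have "X = sup X (inf c Y)" using zX by (simp add: sup.absorb1)
      also have "\<dots> = inf (sup X c) Y" by (rule modular_onD[OF mod XY])
      also have "\<dots> = inf (sup c Y) Y" using IH by (simp add: sup.commute)
      also have "\<dots> = Y" by (simp add: inf.absorb2)
      finally show ?thesis unfolding X_def Y_def .
    qed
  qed
  from this[of "length bs"] show ?thesis by simp
qed

lemma finite_length_interval_if_join_of_atoms:
  fixes bs :: "'a::lattice list"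
  assumes mod: "modular_on (UNIV :: 'a::lattice set)"
    and atoms: "\<forall>b\<in>set bs. covers b z" and top: "foldr sup bs z = s"
  shows "finite_length {x. z \<le> x \<and> x \<le> s}"
  unfolding finite_length_def
proof (intro exI[of _ "Suc (length bs)"] allI impI)
  fix C assume C: "C \<subseteq> {x. z \<le> x \<and> x \<le> s}" and chain: "\<forall>x\<in>C. \<forall>y\<in>C. x \<le> y \<or> y \<le> x"
  define h where "h x = card (growth_steps bs x)" for x
  have eq_if_le: "x = y" if "x \<in> C" "y \<in> C" "x \<le> y" "h x = h y" for x y
  proof -
    have "finite (growth_steps bs x)" using growth_steps_subset finite_subset by blast
    then have "growth_steps bs y = growth_steps bs x"
      using card_subset_eq growth_steps_antimono[OF \<open>x \<le> y\<close>] \<open>h x = h y\<close> unfolding h_def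
      by metis
    moreover have "z \<le> x" "y \<le> s" using that(1,2) C by auto
    ultimately show ?thesis using growth_steps_eq_imp_eq[OF mod atoms top _ \<open>x \<le> y\<close>] by simp
  qed
  have inj: "inj_on h C"
  proof (rule inj_onI)
    fix x y assume "x \<in> C" "y \<in> C" "h x = h y"
    then show "x = y" using chain eq_if_le[of x y] eq_if_le[of y x] by auto
  qed
  have img: "h ` C \<subseteq> {..length bs}"
    using card_mono[OF finite_lessThan growth_steps_subset] unfolding h_def by auto
  then have "finite (h ` C)" using finite_subset by blast
  then have "finite C" using finite_imageD inj by blast
  moreover have "card C \<le> Suc (length bs)"
    using card_image[OF inj] card_mono[OF finite_atMost img] by simp
  ultimately show "finite C \<and> card C \<le> Suc (length bs)" ..
qed

lemma relative_complement_modulo_lower_covers: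
  assumes mod: "modular_on (UNIV :: 'a::lattice set)" and "m \<le> s"
    and "\<forall>y\<in>set ys. covers s y"
  shows "\<exists>w. foldr inf ys s \<le> w \<and> w \<le> s \<and> sup m w = s \<and> inf m w \<le> foldr inf ys (s::'a)"
  using assms(3)
proof (induction ys)
  case Nil
  show ?case using \<open>m \<le> s\<close> by (intro exI[of _ s]) (simp add: sup.absorb2)
next
  case (Cons y ys)
  then obtain w where w: "foldr inf ys s \<le> w" "w \<le> s" "sup m w = s" "inf m w \<le> foldr inf ys s"
    by auto
  have y: "covers s y" using Cons.prems by simp
  show ?case
  proof (cases "sup m (inf y w) = s")
    case True
    have "inf m (inf y w) \<le> inf m w" by (rule inf_mono[OF order_refl inf_le2])
    then have "inf m (inf y w) \<le> inf y (foldr inf ys s)"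
      by (rule le_infI[OF le_infI2[OF inf_le1] order_trans[OF _ w(4)]])
    then show ?thesis using True inf_mono[OF order_refl w(1)] le_infI2[OF w(2)]
      by (intro exI[of _ "inf y w"]) simp
  next
    case False
    have "inf m w \<le> y"
    proof (rule ccontr)
      assume "\<not> inf m w \<le> y"
      then have "y < sup (inf m w) y" by (simp add: less_le_not_le)
      moreover have "sup (inf m w) y \<le> s"
        using \<open>m \<le> s\<close> y unfolding covers_def by (simp add: le_infI1 order_less_imp_le)
      ultimately have "sup (inf m w) y = s" using y unfolding covers_def order_le_less by blast
      then have "sup (inf m w) (inf y w) = w"
        using modular_onD[OF mod inf_le2[of m w], of y] w(2) by (simp add: inf.absorb2)
      moreover have "sup (inf m w) (inf y w) \<le> sup m (inf y w)" by (rule sup_mono) simp_all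
      ultimately have "s \<le> sup m (inf y w)" unfolding w(3)[symmetric] by simp
      moreover have "sup m (inf y w) \<le> s" using \<open>m \<le> s\<close> w(2) by (simp add: le_infI2)
      ultimately show False using False by simp
    qed
    then show ?thesis using w by (intro exI[of _ w]) (auto intro: le_infI2)
  qed
qed


subsection \<open>Right-ordered groups\<close>

lemma add_right_le_iff:
  assumes "right_invariant TYPE('a)"
  shows "x + z \<le> y + z \<longleftrightarrow> x \<le> (y::'a::{group_add,lattice})"
proof
  assume "x + z \<le> y + z"
  then have "x + z + - z \<le> y + z + - z" using assms unfolding right_invariant_def by blast
  then show "x \<le> y" by (simp add: add.assoc)
qed (use assms in \<open>auto simp: right_invariant_def\<close>)

lemma add_right_less_iff:
  "right_invariant TYPE('a) \<Longrightarrow> x + z < y + z \<longleftrightarrow> x < (y::'a::{group_add,lattice})"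
  by (simp add: less_le_not_le add_right_le_iff)

lemma covers_add_right:
  assumes "right_invariant TYPE('a)"
  shows "covers (a + g) (b + g) \<longleftrightarrow> covers a (b::'a::{group_add,lattice})"
proof -
  have "(\<exists>k. b + g < k \<and> k < a + g) \<longleftrightarrow> (\<exists>k. b + g < k + g \<and> k + g < a + g)"
    by (metis diff_add_cancel)
  then show ?thesis unfolding covers_def using add_right_less_iff[OF assms] by simp
qed

lemma trivial_if_greatest:
  assumes "right_invariant TYPE('a)" and "\<forall>w. w \<le> (t::'a::{group_add,lattice})"
  shows "z = (0::'a)"
proof -
  have "t + - z + z \<le> t + z" using assms add_right_le_iff[OF assms(1)] by blast
  then have "t \<le> t + z" by (simp add: add.assoc)
  then have "t + z = t + 0" using assms(2) by (simp add: order.antisym)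
  then show ?thesis by (rule add_left_imp_eq)
qed


subsection \<open>The interval \<open>[0, s]\<close>\<close>

locale modular_noetherian_rlgroup =
  fixes s :: "'a::{group_add,lattice}"
  assumes right_inv: "right_invariant TYPE('a)"
    and modular: "modular_on (UNIV :: 'a set)"
    and noetherian: "noetherian TYPE('a)"
    and neg_s_glb: "is_glb_in UNIV X_neg (- s)"
begin

lemma dcc: "wfP (\<lambda>x y. g \<le> x \<and> x < (y::'a))"
  using noetherian unfolding noetherian_def by blast

lemma acc: "wfP (\<lambda>x y. x \<le> g \<and> y < (x::'a))"
  using noetherian unfolding noetherian_def by blast

lemma neg_s_le_X_neg: "x \<in> X_neg \<Longrightarrow> - s \<le> x"
  using neg_s_glb unfolding is_glb_in_def by blast

lemma le_neg_s_if_below_X_neg: "(\<And>x. x \<in> X_neg \<Longrightarrow> z \<le> x) \<Longrightarrow> z \<le> - s"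
  using neg_s_glb unfolding is_glb_in_def by blast

lemma trivial_if_X_neg_empty:
  assumes "(X_neg :: 'a set) = {}"
  shows "(z::'a) = 0"
proof -
  have "w \<le> - s" for w by (rule le_neg_s_if_below_X_neg) (simp add: assms)
  then show ?thesis using trivial_if_greatest[OF right_inv] by blast
qed

lemma neg_s_add_le_if_covers:
  assumes "covers u z"
  shows "- s + u \<le> z"
proof -
  have "covers (u + - u) (z + - u)" using assms covers_add_right[OF right_inv] by blast
  then have "- s \<le> z + - u" using neg_s_le_X_neg unfolding X_neg_def by simp
  then show ?thesis using add_right_le_iff[OF right_inv, of "- s" u "z + - u"]
    by (simp add: add.assoc)
qed

lemma zero_le_if_covered_by_s: "covers s y \<Longrightarrow> 0 \<le> y"
  using neg_s_add_le_if_covers[of s y] by simp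

lemma le_zero_if_below_lower_covers_of_s:
  assumes "\<And>y. covers s y \<Longrightarrow> z \<le> y"
  shows "z \<le> 0"
proof -
  have "z + - s \<le> - s"
  proof (rule le_neg_s_if_below_X_neg)
    fix x :: 'a assume "x \<in> X_neg"
    then have "covers (0 + s) (x + s)" using covers_add_right[OF right_inv] unfolding X_neg_def by blast
    then have "z \<le> x + s" using assms by simp
    then show "z + - s \<le> x" using add_right_le_iff[OF right_inv, of z "- s" "x + s"]
      by (simp add: add.assoc)
  qed
  then show ?thesis using add_right_le_iff[OF right_inv, of z "- s" 0] by simp
qed

lemma zero_le_s: "0 \<le> s"
proof (cases "(X_neg :: 'a set) = {}")
  case True
  then show ?thesis using trivial_if_X_neg_empty[of s] by simp
next
  case False
  then obtain x :: 'a where x: "x \<in> X_neg" by blast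
  then have "x < 0" unfolding X_neg_def covers_def by simp
  then have "- s + s \<le> 0 + s"
    using neg_s_le_X_neg[OF x] add_right_le_iff[OF right_inv, of "- s" s 0] by simp
  then show ?thesis by simp
qed

lemma zero_le_if_above_atoms:
  assumes "\<And>b. covers b 0 \<Longrightarrow> b \<le> (z::'a)"
  shows "0 \<le> z"
proof (cases "(X_neg :: 'a set) = {}")
  case True
  then show ?thesis using trivial_if_X_neg_empty[of z] by simp
next
  case False
  then obtain x :: 'a where "covers 0 x" unfolding X_neg_def by blast
  then have "covers (0 + - x) (x + - x)" using covers_add_right[OF right_inv] by blast
  then have "covers (- x) 0" by simp
  then have "0 < - x" "- x \<le> z" using assms unfolding covers_def by auto
  then show ?thesis by simp
qed

lemma neg_s_add_not_le_zero:
  assumes "s < u"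
  shows "\<not> - s + u \<le> 0"
proof
  assume "- s + u \<le> 0"
  txt \<open>Then translation by \<open>-u + s\<close> maps \<open>[0, u]\<close> into \<open>[0, s]\<close> and \<open>u\<close> to \<open>s\<close>, so it
    shrinks \<open>[0, s]\<close> strictly.\<close>
  define t where "t x = x + (- u + s)" for x
  define I where "I = {x. 0 \<le> x \<and> x \<le> s}"
  have t_le_iff: "t x \<le> t y \<longleftrightarrow> x \<le> y" for x y
    unfolding t_def using add_right_le_iff[OF right_inv] .
  have t_bottom: "t (- s + u) = 0" and t_top: "t u = s" unfolding t_def by (simp_all add: add.assoc)
  have "t x \<in> I" if "x \<in> I" for x
  proof -
    have "- s + u \<le> x" "x \<le> u" using that \<open>- s + u \<le> 0\<close> \<open>s < u\<close> unfolding I_def by auto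
    then have "0 \<le> t x" "t x \<le> s" using t_le_iff t_bottom t_top by metis+
    then show ?thesis unfolding I_def by simp
  qed
  moreover have "t x < t y" if "x < y" for x y using that t_le_iff by (simp add: less_le_not_le)
  moreover have "t s < s"
    using \<open>s < u\<close> t_le_iff[of s u] t_le_iff[of u s] t_top by (simp add: less_le_not_le)
  moreover have "s \<in> I" "\<forall>x\<in>I. 0 \<le> x" using zero_le_s unfolding I_def by auto
  ultimately show False
    using no_strict_mono_shrinking[OF dcc, where A = I and t = t and x = s] by blast
qed

lemma atom_le_s:
  assumes atom: "covers b 0"
  shows "b \<le> s"
proof (rule ccontr)
  assume "\<not> b \<le> s"
  define u where "u = sup b s"
  have inf_bs: "inf b s = 0" using covers_inf_eq[OF atom zero_le_s \<open>\<not> b \<le> s\<close>] .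
  have "covers u s"
    unfolding u_def using covers_sup_if_covers_inf[OF modular] atom inf_bs by simp
  then have "s < u" and "- s + u \<le> s"
    using neg_s_add_le_if_covers unfolding covers_def by auto
  have "- s + u \<le> 0"
  proof (rule le_zero_if_below_lower_covers_of_s)
    fix y assume y: "covers s y"
    then have "y \<le> s" "0 \<le> y" using zero_le_if_covered_by_s unfolding covers_def by auto
    then have "inf (sup y b) s = y"
      using modular_onD[OF modular, of y s b] inf_bs by (simp add: sup.absorb1)
    then have inf_y: "inf s (sup y b) = y" by (subst inf.commute)
    then have "covers (sup s (sup y b)) (sup y b)"
      using covers_sup_if_covers_inf[OF modular] y by simp
    moreover have "sup s (sup y b) = u"
    proof -
      have "sup s (sup y b) = sup (sup y s) b" by (simp add: ac_simps)
      also have "\<dots> = sup s b" using \<open>y \<le> s\<close> by (simp add: sup.absorb2)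
      finally show ?thesis unfolding u_def by (simp add: sup.commute)
    qed
    ultimately have "- s + u \<le> sup y b" using neg_s_add_le_if_covers by simp
    then have "- s + u \<le> inf s (sup y b)" using \<open>- s + u \<le> s\<close> by simp
    then show "- s + u \<le> y" using inf_y by simp
  qed
  with neg_s_add_not_le_zero[OF \<open>s < u\<close>] show False ..
qed

lemma interval_complement:
  assumes "0 \<le> m" and "m \<le> s"
  shows "\<exists>c. 0 \<le> c \<and> c \<le> s \<and> inf m c = 0 \<and> sup m c = s"
proof -
  obtain ys where ys: "set ys \<subseteq> {y. covers s y}"
    and below: "\<forall>y\<in>{y. covers s y}. foldr inf ys s \<le> y"
    using exists_finite_meet_lower_bound[OF dcc zero_le_s, of "{y. covers s y}"]
      zero_le_if_covered_by_s by blast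
  have "foldr inf ys s \<le> 0" using below le_zero_if_below_lower_covers_of_s by blast
  moreover have "0 \<le> foldr inf ys s"
    using ys zero_le_s zero_le_if_covered_by_s by (auto simp: le_foldr_inf_iff)
  ultimately have meet: "foldr inf ys s = 0" by simp
  have lower_covers: "\<forall>y\<in>set ys. covers s y" using ys by auto
  obtain w where "0 \<le> w" "w \<le> s" "sup m w = s" "inf m w \<le> 0"
    using relative_complement_modulo_lower_covers[OF modular \<open>m \<le> s\<close> lower_covers] meet by auto
  then show ?thesis using \<open>0 \<le> m\<close> by (intro exI[of _ w]) (auto simp: order.antisym)
qed

lemma interval_atomistic:
  assumes "0 \<le> x" and "x \<le> s"
  shows "\<exists>bs. (\<forall>b\<in>set bs. covers b 0) \<and> foldr sup bs 0 = x"
proof -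
  define Q where "Q = {foldr sup bs 0 | bs. (\<forall>b\<in>set bs. covers b 0) \<and> foldr sup bs 0 \<le> x}"
  have "0 \<in> Q" unfolding Q_def using \<open>0 \<le> x\<close> by (intro CollectI exI[of _ "[]"]) simp
  moreover have "\<forall>q\<in>Q. q \<le> x" unfolding Q_def by blast
  ultimately obtain m where "m \<in> Q" and max: "\<forall>q\<in>Q. \<not> m < q"
    using exists_maximal_below[OF acc] by meson
  then obtain bs where bs: "\<forall>b\<in>set bs. covers b 0" "m \<le> x" and m: "m = foldr sup bs 0"
    unfolding Q_def by blast
  have "0 \<le> m" unfolding m by (rule foldr_sup_upper)
  have "m = x"
  proof (rule ccontr)
    assume "m \<noteq> x"
    have "m \<le> s" using bs(2) \<open>x \<le> s\<close> by (rule order_trans)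
    then obtain c where c: "0 \<le> c" "c \<le> s" "inf m c = 0" "sup m c = s"
      using interval_complement[OF \<open>0 \<le> m\<close>] by blast
    define y where "y = inf c x"
    have "inf m y = 0"
      unfolding y_def using c(3) \<open>0 \<le> x\<close> by (simp add: inf.absorb1 inf.assoc[symmetric])
    have "sup m y = x"
      unfolding y_def using modular_onD[OF modular bs(2), of c] c(4) \<open>x \<le> s\<close> by (simp add: inf.absorb2)
    then have "y \<noteq> 0" using \<open>m \<noteq> x\<close> \<open>0 \<le> m\<close> by (auto simp: sup.absorb1)
    moreover have "0 \<le> y" unfolding y_def using c(1) \<open>0 \<le> x\<close> by simp
    ultimately have "0 < y" by (simp add: order_less_le)
    then obtain b where b: "covers b 0" "b \<le> y" using exists_cover_below[OF dcc] by blast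
    have "\<not> b \<le> m"
    proof
      assume "b \<le> m"
      then have "b \<le> inf m y" using b(2) by simp
      then show False using b(1) \<open>inf m y = 0\<close> unfolding covers_def by (simp add: less_le_not_le)
    qed
    then have "m < sup b m" by (simp add: less_le_not_le)
    moreover have "b \<le> x" using b(2) unfolding y_def by simp
    then have "sup b m \<in> Q" unfolding Q_def m using b(1) bs
      by (intro CollectI exI[of _ "b # bs"]) (simp add: m)
    ultimately show False using max by blast
  qed
  then show ?thesis using bs m by blast
qed

lemma s_is_lub_of_atoms: "is_lub_in UNIV {g. covers g 0} s"
proof -
  obtain bs where bs: "\<forall>b\<in>set bs. covers b 0" "foldr sup bs 0 = s"
    using interval_atomistic[OF zero_le_s order_refl] by blast
  have "s \<le> z" if "\<forall>b\<in>{g. covers g 0}. b \<le> z" for z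
  proof -
    have "0 \<le> z" by (rule zero_le_if_above_atoms) (use that in simp)
    then show ?thesis using that bs by (auto simp: foldr_sup_le_iff)
  qed
  then show ?thesis unfolding is_lub_in_def using atom_le_s by blast
qed

lemma interval_modular_geometric: "modular_geometric_lattice {x. 0 \<le> x \<and> x \<le> s} 0"
  unfolding modular_geometric_lattice_def
proof (intro conjI ballI)
  let ?I = "{x. 0 \<le> x \<and> x \<le> s}"
  show "0 \<in> ?I" using zero_le_s by simp
  show "0 \<le> x" if "x \<in> ?I" for x using that by simp
  show "sup x y \<in> ?I" "inf x y \<in> ?I" if "x \<in> ?I" "y \<in> ?I" for x y
    using that by (auto intro: le_supI1 le_infI1)
  show "modular_on ?I" using modular by (rule modular_on_subset) simp
  obtain bs where "\<forall>b\<in>set bs. covers b 0" "foldr sup bs 0 = s"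
    using interval_atomistic[OF zero_le_s order_refl] by blast
  then show "finite_length ?I" by (rule finite_length_interval_if_join_of_atoms[OF modular])
next
  let ?I = "{x. 0 \<le> x \<and> x \<le> s}"
  fix x assume "x \<in> ?I"
  then have "0 \<le> x" "x \<le> s" by simp_all
  then obtain bs where bs: "\<forall>b\<in>set bs. covers b 0" "foldr sup bs 0 = x"
    using interval_atomistic by blast
  have "set bs \<subseteq> {a\<in>?I. 0 < a \<and> \<not> (\<exists>k\<in>?I. 0 < k \<and> k < a)}"
  proof
    fix a assume "a \<in> set bs"
    then have "covers a 0" using bs(1) by blast
    then show "a \<in> {a\<in>?I. 0 < a \<and> \<not> (\<exists>k\<in>?I. 0 < k \<and> k < a)}"
      using atom_le_s unfolding covers_def by (blast intro: order_less_imp_le)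
  qed
  moreover have "is_lub_in ?I (set bs) x"
    unfolding bs(2)[symmetric] by (rule is_lub_in_foldr_sup) (use \<open>x \<in> ?I\<close> bs(2) in auto)
  ultimately show "\<exists>F. finite F \<and> F \<subseteq> {a\<in>?I. 0 < a \<and> \<not> (\<exists>k\<in>?I. 0 < k \<and> k < a)}
    \<and> is_lub_in ?I F x" by blast
qed

end

theorem mainTheorem10:
  fixes s :: "'a::{group_add,lattice}"
  assumes "right_invariant TYPE('a)"
    and "modular_on (UNIV :: 'a set)"
    and "noetherian TYPE('a)"
    and "is_glb_in UNIV X_neg (- s)"
  shows "is_lub_in UNIV {g. covers g 0} s \<and> modular_geometric_lattice {x. 0 \<le> x \<and> x \<le> s} 0"
proof -
  interpret modular_noetherian_rlgroup s using assms by unfold_locales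
  show ?thesis by (intro conjI s_is_lub_of_atoms interval_modular_geometric)
qed

end
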